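(* Let $\mathbb{X}$ be an algebra with identity (not necessarily normed) over a field $\mathcal{F}$, let $\mathcal{G}$ be its group of units, let $k\ge1$ be an integer, let $a_0,\dots,a_k,b_0,\dots,b_k\in\mathbb{X}$, and let $g_n:\mathbb{X}\to\mathbb{X}$, $n\ge 0$, be arbitrary functions. Consider $$x_{n+1}=\sum_{i=0}^{k}a_ix_{n-i}+g_n\Big(\sum_{i=0}^{k}b_ix_{n-i}\Big),\quad n\ge0. \tag{E}$$ Suppose the polynomials $$P(\xi)=\xi^{k+1}-\sum_{i=0}^{k}a_i\xi^{k-i},\qquad Q(\xi)=\sum_{i=0}^{k}b_i\xi^{k-i}$$ have a common root $\rho\in\mathcal{G}$, i.e. $P(\rho)=Q(\rho)=0$. For $i=0,\dots,k-1$ put $$p_i=\rho^{i+1}-a_0\rho^i-a_1\rho^{i-1}-\cdots-a_i,\qquad q_i=b_0\rho^i+b_1\rho^{i-1}+\cdots+b_i.$$ Then each solution $\{x_n\}$ of (E) with initial values $x_0,\dots,x_{-k}\in\mathbb{X}$ satisfies $x_{n+1}=\rho x_n+t_{n+1}$ for all $n\ge -k$, where $\{t_n\}_{n\ge -k+1}$ is the unique solution of the order-$k$ equation $$t_{n+1}=-\sum_{i=0}^{k-1}p_it_{n-i}+g_n\Big(\sum_{i=0}^{k-1}q_it_{n-i}\Big),\quad n\ge0, \tag{F}$$ with initial values $t_{-i}=x_{-i}-\rho x_{-i-1}$, $i=0,1,\dots,k-1$. Conversely, if $\{t_n\}$ is a solution of (F) with initial values $t_0,\dots,t_{-k+1}\in\mathbb{X}$,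 and $x_{-k}\in\mathbb{X}$ is arbitrary, then the sequence defined by $x_{m+1}=\rho x_m+t_{m+1}$ for $m\ge -k$ is a solution of (E).
   Context: In the possibly noncommutative algebra $\mathbb{X}$, polynomials are evaluated with coefficients written on the left, e.g. $P(\rho)=\rho^{k+1}-\sum_{i=0}^k a_i\rho^{k-i}$. An element $u$ is a unit if it has a two-sided inverse $u^{-1}$; $\mathcal{G}$ denotes the set of units. *)

theory Defs
  imports Main
begin

definition is_algebra :: "('f::field \<Rightarrow> 'a::ring_1 \<Rightarrow> 'a) \<Rightarrow> bool" where
  "is_algebra sc \<longleftrightarrow>
     (\<forall>c x y. sc c (x + y) = sc c x + sc c y) \<and>
     (\<forall>c d x. sc (c + d) x = sc c x + sc d x) \<and>
     (\<forall>c d x. sc c (sc d x) = sc (c * d) x) \<and>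
     (\<forall>x. sc 1 x = x) \<and>
     (\<forall>c x y. sc c (x * y) = sc c x * y \<and> sc c (x * y) = x * sc c y)"

definition is_unit_elem :: "'a::ring_1 \<Rightarrow> bool" where
  "is_unit_elem u \<longleftrightarrow> (\<exists>v. u * v = 1 \<and> v * u = 1)"

text \<open>Solutions of (E): sequences indexed by integers n \<ge> -k.\<close>
definition solE :: "nat \<Rightarrow> (nat \<Rightarrow> 'a::ring_1) \<Rightarrow> (nat \<Rightarrow> 'a) \<Rightarrow> (nat \<Rightarrow> 'a \<Rightarrow> 'a)
    \<Rightarrow> (int \<Rightarrow> 'a) \<Rightarrow> bool" where
  "solE k a b g x \<longleftrightarrow> (\<forall>n::nat.
     x (int n + 1) = (\<Sum>i=0..k. a i * x (int n - int i))
                     + g n (\<Sum>i=0..k. b i * x (int n - int i)))"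

definition polyP :: "nat \<Rightarrow> (nat \<Rightarrow> 'a::ring_1) \<Rightarrow> 'a \<Rightarrow> 'a" where
  "polyP k a \<xi> = \<xi> ^ (k + 1) - (\<Sum>i=0..k. a i * \<xi> ^ (k - i))"

definition polyQ :: "nat \<Rightarrow> (nat \<Rightarrow> 'a::ring_1) \<Rightarrow> 'a \<Rightarrow> 'a" where
  "polyQ k b \<xi> = (\<Sum>i=0..k. b i * \<xi> ^ (k - i))"

definition pcoef :: "(nat \<Rightarrow> 'a::ring_1) \<Rightarrow> 'a \<Rightarrow> nat \<Rightarrow> 'a" where
  "pcoef a \<rho> i = \<rho> ^ (i + 1) - (\<Sum>j=0..i. a j * \<rho> ^ (i - j))"

definition qcoef :: "(nat \<Rightarrow> 'a::ring_1) \<Rightarrow> 'a \<Rightarrow> nat \<Rightarrow> 'a" where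
  "qcoef b \<rho> i = (\<Sum>j=0..i. b j * \<rho> ^ (i - j))"

text \<open>Solutions of (F): sequences indexed by integers n \<ge> -k+1.\<close>
definition solF :: "nat \<Rightarrow> (nat \<Rightarrow> 'a::ring_1) \<Rightarrow> (nat \<Rightarrow> 'a) \<Rightarrow> (nat \<Rightarrow> 'a \<Rightarrow> 'a)
    \<Rightarrow> (int \<Rightarrow> 'a) \<Rightarrow> bool" where
  "solF k p q g t \<longleftrightarrow> (\<forall>n::nat.
     t (int n + 1) = - (\<Sum>i=0..<k. p i * t (int n - int i))
                     + g n (\<Sum>i=0..<k. q i * t (int n - int i)))"

end

theory Submission imports Defs begin

(* Put t m = x m - rho * x (m - 1).  If this relation holds on the
   window n, n-1, ..., n-k+1 of a sequence, then Abel summation turns the two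
   sums of (F) into those of (E): the q-sum equals the b-sum because Q(rho) = 0,
   and minus the p-sum equals the a-sum minus rho * x n because P(rho) = 0
   (lemmas q_sum_eq_b_sum and p_sum_eq_a_sum, resting on the telescoping
   identities abel_horner and abel_powers).  Combined in step_F_iff_E, one step
   of (F) for t is the same as one step of (E) for x.  Hence the differences of
   a solution of (E) solve (F); a solution of (F) with matching initial values
   coincides with these differences by induction (differences_unique); and
   conversely a sequence whose differences solve (F) solves (E). *)

text \<open>Abel summation against the Horner partial sums of c evaluated at rho.\<close>
lemma abel_horner:
  fixes c y :: "nat \<Rightarrow> 'a::ring_1" and \<rho> :: 'a
  shows "(\<Sum>i=0..<K. (\<Sum>j=0..i. c j * \<rho>^(i-j)) * (y i - \<rho> * y (Suc i)))
        + (\<Sum>j=0..<K. c j * \<rho>^(K-j)) * y K = (\<Sum>i=0..<K. c i * y i)"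
proof (induction K)
  case 0 then show ?case by simp
next
  case (Suc K)
  define h where "h = (\<Sum>j=0..K. c j * \<rho>^(K-j))"
  define B where "B = (\<Sum>j=0..<K. c j * \<rho>^(K-j))"
  have horner_step: "(\<Sum>j=0..<Suc K. c j * \<rho>^(Suc K-j)) = h * \<rho>"
    unfolding h_def sum_distrib_right atLeastLessThanSuc_atLeastAtMost
    by (rule sum.cong) (auto simp: Suc_diff_le power_Suc2 mult.assoc power_commutes)
  have h_split: "h = B + c K"
    unfolding h_def B_def by (simp add: atLeastLessThanSuc_atLeastAtMost[symmetric])
  have "(\<Sum>i=0..<Suc K. (\<Sum>j=0..i. c j * \<rho>^(i-j)) * (y i - \<rho> * y (Suc i)))
        + (\<Sum>j=0..<Suc K. c j * \<rho>^(Suc K-j)) * y (Suc K)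
      = ((\<Sum>i=0..<K. (\<Sum>j=0..i. c j * \<rho>^(i-j)) * (y i - \<rho> * y (Suc i))) + B * y K)
        + c K * y K"
    unfolding horner_step by (simp add: h_def[symmetric] h_split algebra_simps B_def)
  also have "\<dots> = (\<Sum>i=0..<Suc K. c i * y i)" using Suc by (simp add: B_def)
  finally show ?case .
qed

lemma abel_powers:
  fixes y :: "nat \<Rightarrow> 'a::ring_1" and \<rho> :: 'a
  shows "(\<Sum>i=0..<K. \<rho>^(Suc i) * (y i - \<rho> * y (Suc i))) = \<rho> * y 0 - \<rho>^(Suc K) * y K"
proof -
  have commute: "\<And>n z. \<rho>^n * (\<rho> * z) = \<rho> * (\<rho>^n * z)"
    by (simp add: mult.assoc[symmetric] power_commutes)
  show ?thesis by (induction K) (simp_all add: algebra_simps commute)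
qed

lemma q_sum_eq_b_sum:
  fixes x t :: "int \<Rightarrow> 'a::ring_1"
  assumes diff: "\<And>i. i < k \<Longrightarrow> t (int n - int i) = x (int n - int i) - \<rho> * x (int n - int i - 1)"
    and Q0: "polyQ k b \<rho> = 0"
  shows "(\<Sum>i=0..<k. qcoef b \<rho> i * t (int n - int i)) = (\<Sum>i=0..k. b i * x (int n - int i))"
proof -
  define y where "y i = x (int n - int i)" for i :: nat
  have "(\<Sum>i=0..<k. qcoef b \<rho> i * t (int n - int i))
      = (\<Sum>i=0..<k. (\<Sum>j=0..i. b j * \<rho>^(i-j)) * (y i - \<rho> * y (Suc i)))"
    by (rule sum.cong) (auto simp: diff qcoef_def y_def algebra_simps)
  also have "\<dots> = (\<Sum>i=0..<k. b i * y i) - (\<Sum>j=0..<k. b j * \<rho>^(k-j)) * y k"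
    using abel_horner[of b \<rho> y k] by (simp add: algebra_simps)
  also have "(\<Sum>j=0..<k. b j * \<rho>^(k-j)) = - b k"
    using Q0 unfolding polyQ_def
    by (simp add: atLeastLessThanSuc_atLeastAtMost[symmetric] eq_neg_iff_add_eq_0)
  finally show ?thesis
    by (simp add: atLeastLessThanSuc_atLeastAtMost[symmetric] y_def)
qed

lemma p_sum_eq_a_sum:
  fixes x t :: "int \<Rightarrow> 'a::ring_1"
  assumes diff: "\<And>i. i < k \<Longrightarrow> t (int n - int i) = x (int n - int i) - \<rho> * x (int n - int i - 1)"
    and P0: "polyP k a \<rho> = 0"
  shows "- (\<Sum>i=0..<k. pcoef a \<rho> i * t (int n - int i))
      = (\<Sum>i=0..k. a i * x (int n - int i)) - \<rho> * x (int n)"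
proof -
  define y where "y i = x (int n - int i)" for i :: nat
  have "(\<Sum>i=0..<k. pcoef a \<rho> i * t (int n - int i))
      = (\<Sum>i=0..<k. \<rho>^(Suc i) * (y i - \<rho> * y (Suc i)))
        - (\<Sum>i=0..<k. (\<Sum>j=0..i. a j * \<rho>^(i-j)) * (y i - \<rho> * y (Suc i)))"
    unfolding sum_subtractf[symmetric]
    by (rule sum.cong) (auto simp: diff pcoef_def y_def algebra_simps)
  also have "\<dots> = (\<rho> * y 0 - \<rho>^(Suc k) * y k)
        - ((\<Sum>i=0..<k. a i * y i) - (\<Sum>j=0..<k. a j * \<rho>^(k-j)) * y k)"
    using abel_horner[of a \<rho> y k] abel_powers[of \<rho> y k] by (simp add: algebra_simps)
  also have "(\<Sum>j=0..<k. a j * \<rho>^(k-j)) = \<rho>^(Suc k) - a k"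
    using P0 unfolding polyP_def
    by (simp add: atLeastLessThanSuc_atLeastAtMost[symmetric] algebra_simps)
  finally show ?thesis
    by (simp add: atLeastLessThanSuc_atLeastAtMost[symmetric] y_def algebra_simps)
qed

lemma rhs_F_eq_rhs_E:
  fixes x t :: "int \<Rightarrow> 'a::ring_1"
  assumes diff: "\<And>i. i < k \<Longrightarrow> t (int n - int i) = x (int n - int i) - \<rho> * x (int n - int i - 1)"
    and P0: "polyP k a \<rho> = 0" and Q0: "polyQ k b \<rho> = 0"
  shows "- (\<Sum>i=0..<k. pcoef a \<rho> i * t (int n - int i))
           + g n (\<Sum>i=0..<k. qcoef b \<rho> i * t (int n - int i))
       = (\<Sum>i=0..k. a i * x (int n - int i)) + g n (\<Sum>i=0..k. b i * x (int n - int i))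
           - \<rho> * x (int n)"
  using p_sum_eq_a_sum[OF diff P0] q_sum_eq_b_sum[OF diff Q0] by (simp add: algebra_simps)

lemma step_F_iff_E:
  fixes x t :: "int \<Rightarrow> 'a::ring_1"
  assumes diff: "\<And>i. i < k \<Longrightarrow> t (int n - int i) = x (int n - int i) - \<rho> * x (int n - int i - 1)"
    and next_diff: "t (int n + 1) = x (int n + 1) - \<rho> * x (int n)"
    and P0: "polyP k a \<rho> = 0" and Q0: "polyQ k b \<rho> = 0"
  shows "t (int n + 1) = - (\<Sum>i=0..<k. pcoef a \<rho> i * t (int n - int i))
                          + g n (\<Sum>i=0..<k. qcoef b \<rho> i * t (int n - int i))
     \<longleftrightarrow> x (int n + 1) = (\<Sum>i=0..k. a i * x (int n - int i))
                          + g n (\<Sum>i=0..k. b i * x (int n - int i))"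
  using rhs_F_eq_rhs_E[OF diff P0 Q0, of g] by (simp add: next_diff)

lemma differences_solve_F:
  fixes x :: "int \<Rightarrow> 'a::ring_1"
  assumes E: "solE k a b g x" and P0: "polyP k a \<rho> = 0" and Q0: "polyQ k b \<rho> = 0"
  shows "solF k (pcoef a \<rho>) (qcoef b \<rho>) g (\<lambda>m. x m - \<rho> * x (m - 1))"
  unfolding solF_def
proof
  fix n :: nat
  show "x (int n + 1) - \<rho> * x (int n + 1 - 1) =
    - (\<Sum>i=0..<k. pcoef a \<rho> i * (x (int n - int i) - \<rho> * x (int n - int i - 1)))
    + g n (\<Sum>i=0..<k. qcoef b \<rho> i * (x (int n - int i) - \<rho> * x (int n - int i - 1)))"
    using step_F_iff_E[where t="\<lambda>m. x m - \<rho> * x (m - 1)" and x=x and g=g, OF _ _ P0 Q0] E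
    unfolding solE_def by simp
qed

lemma differences_unique:
  fixes x t :: "int \<Rightarrow> 'a::ring_1"
  assumes E: "solE k a b g x" and F: "solF k (pcoef a \<rho>) (qcoef b \<rho>) g t"
    and init: "\<forall>i<k. t (- int i) = x (- int i) - \<rho> * x (- int i - 1)"
    and P0: "polyP k a \<rho> = 0" and Q0: "polyQ k b \<rho> = 0"
  shows "t (int j - int k + 1) = x (int j - int k + 1) - \<rho> * x (int j - int k)"
proof (induction j rule: less_induct)
  case (less j)
  show ?case
  proof (cases "j < k")
    case True
    then have "- int (k - 1 - j) = int j - int k + 1" "- int (k - 1 - j) - 1 = int j - int k"
      and "k - 1 - j < k" by auto
    then show ?thesis using init by metis
  next
    case False
    define n where "n = j - k"
    have shift: "int j - int k + 1 = int n + 1" "int j - int k = int n"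
      using False n_def by auto
    have diff: "t (int n - int i) = x (int n - int i) - \<rho> * x (int n - int i - 1)"
      if "i < k" for i
    proof -
      have "j - 1 - i < j" "int n - int i = int (j - 1 - i) - int k + 1"
        "int n - int i - 1 = int (j - 1 - i) - int k" using that False n_def by auto
      then show ?thesis using less.IH by metis
    qed
    have "t (int n + 1) = - (\<Sum>i=0..<k. pcoef a \<rho> i * t (int n - int i))
                          + g n (\<Sum>i=0..<k. qcoef b \<rho> i * t (int n - int i))"
      using F unfolding solF_def by blast
    also have "\<dots> = (\<Sum>i=0..k. a i * x (int n - int i))
                          + g n (\<Sum>i=0..k. b i * x (int n - int i)) - \<rho> * x (int n)"
      by (rule rhs_F_eq_rhs_E[OF diff P0 Q0])
    also have "\<dots> = x (int n + 1) - \<rho> * x (int n)"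
      using E unfolding solE_def by simp
    finally show ?thesis unfolding shift .
  qed
qed

lemma integrate_F_solves_E:
  fixes x t :: "int \<Rightarrow> 'a::ring_1"
  assumes F: "solF k (pcoef a \<rho>) (qcoef b \<rho>) g t"
    and rel: "\<forall>m \<ge> - int k. x (m + 1) = \<rho> * x m + t (m + 1)"
    and P0: "polyP k a \<rho> = 0" and Q0: "polyQ k b \<rho> = 0"
  shows "solE k a b g x"
proof -
  have diff: "t m = x m - \<rho> * x (m - 1)" if "m \<ge> - int k + 1" for m
    using rel[rule_format, of "m - 1"] that by (simp add: algebra_simps)
  show ?thesis
    unfolding solE_def
  proof
    fix n :: nat
    show "x (int n + 1) = (\<Sum>i=0..k. a i * x (int n - int i))
                          + g n (\<Sum>i=0..k. b i * x (int n - int i))"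
    proof -
      have window: "t (int n - int i) = x (int n - int i) - \<rho> * x (int n - int i - 1)"
        if "i < k" for i using diff that by simp
      have "t (int n + 1) = x (int n + 1) - \<rho> * x (int n)" using diff[of "int n + 1"] by simp
      then show ?thesis
        using step_F_iff_E[OF window _ P0 Q0, of g] F unfolding solF_def by blast
    qed
  qed
qed

theorem lemma3:
  fixes sc :: "'f::field \<Rightarrow> 'a::ring_1 \<Rightarrow> 'a"
    and k :: nat and a b :: "nat \<Rightarrow> 'a" and g :: "nat \<Rightarrow> 'a \<Rightarrow> 'a" and \<rho> :: 'a
  assumes alg: "is_algebra sc"
    and k1: "k \<ge> 1"
    and unit: "is_unit_elem \<rho>"
    and P0: "polyP k a \<rho> = 0"
    and Q0: "polyQ k b \<rho> = 0"
  shows "(\<forall>x. solE k a b g x \<longrightarrow>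
            (\<exists>t. solF k (pcoef a \<rho>) (qcoef b \<rho>) g t \<and>
                 (\<forall>i<k. t (- int i) = x (- int i) - \<rho> * x (- int i - 1))) \<and>
            (\<forall>t. solF k (pcoef a \<rho>) (qcoef b \<rho>) g t \<and>
                 (\<forall>i<k. t (- int i) = x (- int i) - \<rho> * x (- int i - 1)) \<longrightarrow>
                 (\<forall>m \<ge> - int k. x (m + 1) = \<rho> * x m + t (m + 1))))
       \<and> (\<forall>t x. solF k (pcoef a \<rho>) (qcoef b \<rho>) g t \<and>
                (\<forall>m \<ge> - int k. x (m + 1) = \<rho> * x m + t (m + 1)) \<longrightarrow>
                solE k a b g x)"
proof (intro conjI allI impI)
  fix x :: "int \<Rightarrow> 'a" assume E: "solE k a b g x"
  show "\<exists>t. solF k (pcoef a \<rho>) (qcoef b \<rho>) g t \<and>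
            (\<forall>i<k. t (- int i) = x (- int i) - \<rho> * x (- int i - 1))"
    using differences_solve_F[OF E P0 Q0] by auto
next
  fix x t :: "int \<Rightarrow> 'a" and m :: int
  assume E: "solE k a b g x"
    and Ft: "solF k (pcoef a \<rho>) (qcoef b \<rho>) g t \<and>
             (\<forall>i<k. t (- int i) = x (- int i) - \<rho> * x (- int i - 1))"
    and m: "m \<ge> - int k"
  have "int (nat (m + int k)) - int k = m" using m by simp
  then show "x (m + 1) = \<rho> * x m + t (m + 1)"
    using differences_unique[OF E _ _ P0 Q0, of t "nat (m + int k)"] Ft
    by (simp add: algebra_simps)
next
  fix t x :: "int \<Rightarrow> 'a"
  assume "solF k (pcoef a \<rho>) (qcoef b \<rho>) g t \<and>
          (\<forall>m \<ge> - int k. x (m + 1) = \<rho> * x m + t (m + 1))"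
  then show "solE k a b g x" using integrate_F_solves_E P0 Q0 by blast
qed

end
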